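(* Let $\varepsilon>0$, let $y\in L^\infty((E_{\min},E_{\max})\times\Sigma)$ be positive, and set $s_i=\sqrt{\mathscr D^*\big(\int_{E_{\min}}^{E_{\max}}y\,g_i\,dE\big)}$ on $\Omega$, $i=1,\dots,N$; assume each $s_i$ is bounded and bounded away from zero on $\Omega$. On $L^2(\Omega;\mathbb R^N)$ define the quadratic form $$Q_y(\boldsymbol\psi,\boldsymbol\psi)=\frac12\int_\Sigma\big(\mathscr D(\boldsymbol\psi/\boldsymbol s)\big)^TG\,\mathscr D(\boldsymbol\psi/\boldsymbol s)\,d\mathcal H^n,$$ where $\boldsymbol\psi/\boldsymbol s=(\psi_1/s_1,\dots,\psi_N/s_N)$ and $\mathscr D$ is applied componentwise, and let $\lambda_y=\sup_{\|\boldsymbol\psi\|_{L^2}\le1}Q_y(\boldsymbol\psi,\boldsymbol\psi)$, assumed finite. Let $\boldsymbol w^{\mathrm{old}},\boldsymbol w^{\mathrm{new}}\in L^\infty(\Omega;[0,1]^N)$ and define $$A^\varepsilon=\int_\Omega\sum_{i=1}^N\frac{\mathscr D^*\big(\int_{E_{\min}}^{E_{\max}}y\,g_i\,dE\big)\,(w^{\mathrm{new}}_i-w^{\mathrm{old}}_i)^2}{w^{\mathrm{old}}_i+\varepsilon}\,dx,\qquad C=\frac12\int_\Sigma\big(\mathscr D(\boldsymbol w^{\mathrm{new}}-\boldsymbol w^{\mathrm{old}})\big)^TG\,\mathscr D(\boldsymbol w^{\mathrm{new}}-\boldsymbol w^{\mathrm{old}})\,d\mathcal H^n.$$ If $C>0$,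 then $\dfrac{A^\varepsilon}{C}\ge\dfrac1{1+\varepsilon}\,\dfrac1{\lambda_y}$.
   Context: Setting: $n\in\{2,3\}$, $\Omega\subset\mathbb R^n$ nonempty bounded open; $\xi\subset\mathbb R^n\setminus\overline\Omega$ a compact smooth curve of finite length without self-intersections; $L^+_{x,\theta}=\{x+s\theta:s\ge0\}$; $\Sigma=\{(x,\theta)\in\xi\times\mathbb S^{n-1}:\mathcal H^1(L^+_{x,\theta}\cap\Omega)>0\}$ with measure $\mathcal H^n$; $\mathscr Du(x,\theta)=\int_{L^+_{x,\theta}}u\,d\mathcal H^1$ ($u$ extended by $0$ outside $\Omega$), with dual $\mathscr D^*h(z)=\int_\xi|z-x|^{1-n}h\big(x,\tfrac{z-x}{|z-x|}\big)\,d\mathcal H^1(x)$ for $z\in\Omega$ ($h$ extended by $0$ off $\Sigma$). $0<E_{\min}<E_{\max}$; $I_0:[E_{\min},E_{\max}]\to[0,\infty)$ Lebesgue integrable; $g_1,\dots,g_N:[E_{\min},E_{\max}]\to[0,\infty)$ bounded measurable, $\boldsymbol g=(g_1,\dots,g_N)$; $G=\int_{E_{\min}}^{E_{\max}}I_0\,\boldsymbol g\otimes\boldsymbol g\,dE\in\mathbb R^{N\times N}$. *)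

theory Defs
  imports "HOL-Analysis.Analysis"
begin

text \<open>Normalising constant omega_s / 2^s, so that H^k agrees with k-dimensional
  surface measure for integer k.\<close>
definition hausdorff_const :: "real \<Rightarrow> real" where
  "hausdorff_const s = pi powr (s / 2) / Gamma (s / 2 + 1) / 2 powr s"

definition hausdorff_content :: "real \<Rightarrow> real \<Rightarrow> 'a::metric_space set \<Rightarrow> ennreal" where
  "hausdorff_content s \<delta> A =
     (INF C \<in> {C :: nat \<Rightarrow> 'a set. A \<subseteq> (\<Union>i. C i) \<and> (\<forall>i. bounded (C i) \<and> diameter (C i) \<le> \<delta>)}.
        (\<Sum>i. ennreal (hausdorff_const s * diameter (C i) powr s)))"

definition hausdorff_outer :: "real \<Rightarrow> 'a::metric_space set \<Rightarrow> ennreal" where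
  "hausdorff_outer s A = (SUP \<delta> \<in> {0<..}. hausdorff_content s \<delta> A)"

definition hausdorff_measure :: "real \<Rightarrow> 'a::metric_space measure" where
  "hausdorff_measure s = measure_of UNIV (sets borel) (hausdorff_outer s)"

text \<open>A compact smooth (C-infinity, regular) curve without self-intersections:
  either an embedded arc or a simple closed curve.\<close>
definition smooth_param :: "(real \<Rightarrow> 'a::real_normed_vector) \<Rightarrow> bool" where
  "smooth_param \<gamma> \<longleftrightarrow> (\<exists>D :: nat \<Rightarrow> real \<Rightarrow> 'a. D 0 = \<gamma> \<and>
      (\<forall>k t. (D k has_vector_derivative D (Suc k) t) (at t)) \<and> (\<forall>t\<in>{0..1}. D 1 t \<noteq> 0))"

definition simple_smooth_curve :: "'a::real_normed_vector set \<Rightarrow> bool" where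
  "simple_smooth_curve \<xi> \<longleftrightarrow> (\<exists>\<gamma>. smooth_param \<gamma> \<and> \<xi> = \<gamma> ` {0..1} \<and>
      (inj_on \<gamma> {0..1} \<or> ((\<forall>t. \<gamma> (t + 1) = \<gamma> t) \<and> inj_on \<gamma> {0..<1})))"

definition ray :: "'a::real_vector \<Rightarrow> 'a \<Rightarrow> 'a set" where
  "ray x \<theta> = {x + t *\<^sub>R \<theta> | t. t \<ge> 0}"

definition SigmaX :: "'a::euclidean_space set \<Rightarrow> 'a set \<Rightarrow> ('a \<times> 'a) set" where
  "SigmaX \<Omega> \<xi> = {(x, \<theta>). x \<in> \<xi> \<and> \<theta> \<in> sphere 0 1 \<and>
      emeasure (hausdorff_measure 1) (ray x \<theta> \<inter> \<Omega>) > 0}"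

definition Dop :: "'a::euclidean_space set \<Rightarrow> ('a \<Rightarrow> real) \<Rightarrow> 'a \<times> 'a \<Rightarrow> real" where
  "Dop \<Omega> u = (\<lambda>(x, \<theta>). LINT z : ray x \<theta> \<inter> \<Omega> | hausdorff_measure 1. u z)"

definition Dstar :: "'a::euclidean_space set \<Rightarrow> 'a set \<Rightarrow> ('a \<times> 'a \<Rightarrow> real) \<Rightarrow> 'a \<Rightarrow> real" where
  "Dstar \<Omega> \<xi> h z = (LINT x : \<xi> | hausdorff_measure 1.
      norm (z - x) powr (1 - real DIM('a)) *
      (if (x, (z - x) /\<^sub>R norm (z - x)) \<in> SigmaX \<Omega> \<xi> then h (x, (z - x) /\<^sub>R norm (z - x)) else 0))"

end

theory Submission
  imports Defs
begin

text \<open>Test the supremum defining \<open>\<lambda>\<^sub>y\<close> with \<open>\<psi> = t s (w_new - w_old)\<close>. Then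
  \<open>\<psi>/s = t (w_new - w_old)\<close> on \<open>\<Omega>\<close>, so \<open>Q\<^sub>y(\<psi>,\<psi>) = t\<^sup>2 C\<close>, while
  \<open>\<parallel>\<psi>\<parallel>\<^sup>2 = t\<^sup>2 P\<close> with \<open>P = \<integral>\<^sub>\<Omega> \<Sum>\<^sub>i s\<^sub>i\<^sup>2 (w_new\<^sub>i - w_old\<^sub>i)\<^sup>2\<close>; admissibility of every such
  \<open>\<psi>\<close> gives \<open>C \<le> \<lambda>\<^sub>y P\<close>. On the other hand \<open>s\<^sub>i\<^sup>2\<close> is exactly the weight in \<open>A\<^sup>\<epsilon>\<close> and
  \<open>w_old\<^sub>i + \<epsilon> \<le> 1 + \<epsilon>\<close>, so \<open>A\<^sup>\<epsilon> \<ge> P / (1 + \<epsilon>)\<close>.\<close>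

text \<open>Unlike \<open>nn_integral_cmult\<close>, this needs no measurability of \<open>f\<close>; the integrands over
  Hausdorff measure below are not known to be measurable.\<close>

lemma nn_integral_cmult_ge:
  fixes c :: ennreal
  shows "c * integral\<^sup>N M f \<le> (\<integral>\<^sup>+ x. c * f x \<partial>M)"
  unfolding nn_integral_def SUP_mult_left_ennreal
proof (intro SUP_least)
  fix g assume g: "g \<in> {g. simple_function M g \<and> g \<le> f}"
  then have "c * integral\<^sup>S M g = integral\<^sup>S M (\<lambda>x. c * g x)" by simp
  also have "\<dots> \<le> (SUP g \<in> {g. simple_function M g \<and> g \<le> (\<lambda>x. c * f x)}. integral\<^sup>S M g)"
    using g by (intro SUP_upper) (auto simp: le_fun_def intro!: mult_left_mono)
  finally show "c * integral\<^sup>S M g \<le> (SUP g \<in> {g. simple_function M g \<and> g \<le> (\<lambda>x. c * f x)}. integral\<^sup>S M g)" .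
qed

lemma set_nn_integral_eq_set_lebesgue_integral:
  fixes f :: "'a \<Rightarrow> real"
  assumes "set_integrable M A f" "\<And>x. x \<in> A \<Longrightarrow> 0 \<le> f x"
  shows "(\<integral>\<^sup>+ x \<in> A. ennreal (f x) \<partial>M) = ennreal (LINT x:A|M. f x)"
  unfolding set_lebesgue_integral_def nn_integral_set_ennreal
  using assms unfolding set_integrable_def
  by (subst nn_integral_eq_integral[symmetric]) (auto simp: indicator_def mult.commute intro!: nn_integral_cong)

lemma set_integrable_bounded_restrict_space:
  fixes f :: "'a \<Rightarrow> real"
  assumes "f \<in> borel_measurable (restrict_space M A)" "A \<in> sets M" "emeasure M A < \<infinity>"
    and "\<And>x. x \<in> A \<Longrightarrow> \<bar>f x\<bar> \<le> B"
  shows "set_integrable M A f"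
  unfolding set_integrable_def
  using assms by (intro integrableI_bounded_set[where A=A and B=B])
    (auto simp: borel_measurable_restrict_space_iff)

definition quad_form :: "'i set \<Rightarrow> ('i \<Rightarrow> 'i \<Rightarrow> real) \<Rightarrow> ('i \<Rightarrow> real) \<Rightarrow> real" where
  "quad_form I G v = (1/2) * (\<Sum>i\<in>I. \<Sum>j\<in>I. v i * G i j * v j)"

lemma quad_form_cong: "(\<And>i. i \<in> I \<Longrightarrow> u i = v i) \<Longrightarrow> quad_form I G u = quad_form I G v"
  unfolding quad_form_def by (intro arg_cong[where f="(*) _"] sum.cong) auto

lemma quad_form_scale: "quad_form I G (\<lambda>i. t * v i) = t\<^sup>2 * quad_form I G v"
  unfolding quad_form_def by (simp add: sum_distrib_left power2_eq_square ac_simps)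

lemma Dop_cmult_cong:
  assumes "\<And>z. z \<in> \<Omega> \<Longrightarrow> u z = t * v z"
  shows "Dop \<Omega> u p = t * Dop \<Omega> v p"
proof -
  obtain x \<theta> where p: "p = (x, \<theta>)" by fastforce
  have "(\<lambda>z. indicator (ray x \<theta> \<inter> \<Omega>) z *\<^sub>R u z) = (\<lambda>z. t * (indicator (ray x \<theta> \<inter> \<Omega>) z *\<^sub>R v z))"
    using assms by (auto simp: indicator_def)
  then show ?thesis unfolding Dop_def p set_lebesgue_integral_def by simp
qed

lemma nn_integral_quad_form_Dop_cmult_ge:
  assumes "\<And>i z. i \<in> I \<Longrightarrow> z \<in> \<Omega> \<Longrightarrow> u i z = t * v i z"
  shows "ennreal (t\<^sup>2) * (\<integral>\<^sup>+ p \<in> S. ennreal (quad_form I G (\<lambda>i. Dop \<Omega> (v i) p)) \<partial>M)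
    \<le> (\<integral>\<^sup>+ p \<in> S. ennreal (quad_form I G (\<lambda>i. Dop \<Omega> (u i) p)) \<partial>M)"
proof -
  have "quad_form I G (\<lambda>i. Dop \<Omega> (u i) p) = t\<^sup>2 * quad_form I G (\<lambda>i. Dop \<Omega> (v i) p)" for p
    using assms by (subst quad_form_scale[symmetric]) (auto intro!: quad_form_cong Dop_cmult_cong)
  then have "ennreal (quad_form I G (\<lambda>i. Dop \<Omega> (u i) p)) * indicator S p
      = ennreal (t\<^sup>2) * (ennreal (quad_form I G (\<lambda>i. Dop \<Omega> (v i) p)) * indicator S p)" for p
    by (simp add: ennreal_mult' mult.assoc)
  then show ?thesis by (simp add: nn_integral_cmult_ge)
qed

lemma inverse_le_ratio_if_scaled_bound:
  fixes P :: real and C L :: ennreal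
  assumes scaled: "\<And>t. t\<^sup>2 * P \<le> 1 \<Longrightarrow> ennreal (t\<^sup>2) * C \<le> L"
    and P: "0 \<le> P" and C: "0 < C" and L: "L < \<infinity>"
  shows "0 < enn2real C" "1 / enn2real L \<le> P / enn2real C"
proof -
  define l where "l = enn2real L"
  have L_eq: "L = ennreal l" "0 \<le> l" using L by (auto simp: l_def less_top)
  have "P \<noteq> 0"
  proof
    assume "P = 0"
    define r where "r = enn2real (min C 1)"
    have r: "0 < r" "ennreal r \<le> C"
      using C by (auto simp: r_def enn2real_positive_iff min_def less_top[symmetric] top_unique ennreal_enn2real_if)
    have "ennreal ((l + 1) / r) * ennreal r \<le> ennreal ((l + 1) / r) * C"
      using r by (intro mult_left_mono) auto
    also have "\<dots> \<le> ennreal l"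
      using scaled[of "sqrt ((l + 1) / r)"] \<open>P = 0\<close> r L_eq by simp
    finally have "l + 1 \<le> l"
      using r L_eq by (simp add: ennreal_mult''[symmetric] ennreal_le_iff)
    then show False by simp
  qed
  with P have P_pos: "0 < P" by simp
  have bound: "ennreal (1 / P) * C \<le> ennreal l"
    using scaled[of "1 / sqrt P"] P_pos L_eq by (simp add: power_divide)
  then have "C \<noteq> \<infinity>" using P_pos by (auto simp: ennreal_mult_top top_unique)
  then show c_pos: "0 < enn2real C" using C by (simp add: enn2real_positive_iff less_top)
  have "ennreal (1 / P) * C = ennreal (enn2real C / P)"
  proof -
    have "C = ennreal (enn2real C)" using \<open>C \<noteq> \<infinity>\<close> by (simp add: less_top)
    then show ?thesis using P_pos by (metis divide_inverse_commute ennreal_mult'' enn2real_nonneg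
        inverse_eq_divide mult.commute)
  qed
  with bound have "ennreal (enn2real C / P) \<le> ennreal l" by simp
  then have "enn2real C / P \<le> l" using L_eq by (simp add: ennreal_le_iff)
  moreover have "0 < enn2real C / P" using c_pos P_pos by simp
  ultimately have "0 < l" by linarith
  with \<open>enn2real C / P \<le> l\<close> show "1 / enn2real L \<le> P / enn2real C"
    using c_pos P_pos unfolding l_def[symmetric] by (simp add: field_simps)
qed

lemma set_integral_sum_div_weight_ge:
  fixes a w :: "'i \<Rightarrow> 'a \<Rightarrow> real" and B :: "'i \<Rightarrow> real"
  assumes \<epsilon>: "0 < \<epsilon>" and \<Omega>: "\<Omega> \<in> sets M" "emeasure M \<Omega> < \<infinity>"
    and meas: "\<And>i. i \<in> I \<Longrightarrow> a i \<in> borel_measurable (restrict_space M \<Omega>)"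
      "\<And>i. i \<in> I \<Longrightarrow> w i \<in> borel_measurable (restrict_space M \<Omega>)"
    and a: "\<And>i z. i \<in> I \<Longrightarrow> z \<in> \<Omega> \<Longrightarrow> 0 \<le> a i z \<and> a i z \<le> B i"
    and w: "\<And>i z. i \<in> I \<Longrightarrow> z \<in> \<Omega> \<Longrightarrow> 0 \<le> w i z \<and> w i z \<le> 1"
  shows "set_integrable M \<Omega> (\<lambda>z. \<Sum>i\<in>I. a i z)"
    and "(LINT z:\<Omega>|M. \<Sum>i\<in>I. a i z) / (1 + \<epsilon>) \<le> (LINT z:\<Omega>|M. \<Sum>i\<in>I. a i z / (w i z + \<epsilon>))"
proof -
  have weighted_le: "a i z / (w i z + \<epsilon>) \<le> B i / \<epsilon>" if "i \<in> I" "z \<in> \<Omega>" for i z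
    using a[OF that] w[OF that] \<epsilon> by (intro frac_le) auto
  show int: "set_integrable M \<Omega> (\<lambda>z. \<Sum>i\<in>I. a i z)"
    using \<Omega> meas a by (intro set_integrable_bounded_restrict_space[where B="\<Sum>i\<in>I. B i"])
      (auto intro!: sum_mono simp: sum_nonneg abs_of_nonneg)
  have weighted_int: "set_integrable M \<Omega> (\<lambda>z. \<Sum>i\<in>I. a i z / (w i z + \<epsilon>))"
    using \<Omega> meas a w \<epsilon> weighted_le
    by (intro set_integrable_bounded_restrict_space[where B="\<Sum>i\<in>I. B i / \<epsilon>"])
      (auto intro!: sum_mono simp: sum_nonneg abs_of_nonneg add_nonneg_pos)
  have "(LINT z:\<Omega>|M. (\<Sum>i\<in>I. a i z) / (1 + \<epsilon>)) \<le> (LINT z:\<Omega>|M. \<Sum>i\<in>I. a i z / (w i z + \<epsilon>))"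
  proof (rule set_integral_mono)
    fix z assume z: "z \<in> \<Omega>"
    show "(\<Sum>i\<in>I. a i z) / (1 + \<epsilon>) \<le> (\<Sum>i\<in>I. a i z / (w i z + \<epsilon>))"
      unfolding sum_divide_distrib
    proof (intro sum_mono divide_left_mono)
      fix i assume i: "i \<in> I"
      with a[OF i z] w[OF i z] \<epsilon> show "w i z + \<epsilon> \<le> 1 + \<epsilon>" "0 \<le> a i z" "0 < (1 + \<epsilon>) * (w i z + \<epsilon>)"
        by auto
    qed
  qed (use int weighted_int in auto)
  then show "(LINT z:\<Omega>|M. \<Sum>i\<in>I. a i z) / (1 + \<epsilon>) \<le> (LINT z:\<Omega>|M. \<Sum>i\<in>I. a i z / (w i z + \<epsilon>))"
    by simp
qed


theorem lemma3p6:
  fixes \<Omega> \<xi> :: "'a::euclidean_space set"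
    and Emin Emax \<epsilon> :: real and N :: nat
    and I0 :: "real \<Rightarrow> real" and g :: "nat \<Rightarrow> real \<Rightarrow> real"
    and y :: "real \<Rightarrow> 'a \<times> 'a \<Rightarrow> real"
    and wold wnew :: "nat \<Rightarrow> 'a \<Rightarrow> real"
  assumes dim: "DIM('a) = 2 \<or> DIM('a) = 3"
    and Omega: "\<Omega> \<noteq> {}" "bounded \<Omega>" "open \<Omega>"
    and xi: "simple_smooth_curve \<xi>" "\<xi> \<inter> closure \<Omega> = {}"
    and Erange: "0 < Emin" "Emin < Emax"
    and I0: "set_integrable lborel {Emin..Emax} I0" "\<forall>E\<in>{Emin..Emax}. I0 E \<ge> 0"
    and g: "\<forall>i\<in>{1..N}. set_borel_measurable lborel {Emin..Emax} (g i) \<and>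
              (\<forall>E\<in>{Emin..Emax}. g i E \<ge> 0) \<and> bounded (g i ` {Emin..Emax})"
    and eps: "\<epsilon> > 0"
    and y_meas: "(\<lambda>(E, p). y E p) \<in> borel_measurable (restrict_space lborel {Emin..Emax} \<Otimes>\<^sub>M
                    restrict_space (hausdorff_measure (real DIM('a))) (SigmaX \<Omega> \<xi>))"
    and y_bdd: "\<exists>M. \<forall>E\<in>{Emin..Emax}. \<forall>p\<in>SigmaX \<Omega> \<xi>. \<bar>y E p\<bar> \<le> M"
    and y_pos: "\<forall>E\<in>{Emin..Emax}. \<forall>p\<in>SigmaX \<Omega> \<xi>. y E p > 0"
    and s_def: "s \<equiv> (\<lambda>i z. sqrt (Dstar \<Omega> \<xi> (\<lambda>p. LINT E:{Emin..Emax}|lborel. y E p * g i E) z))"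
    and s_ok: "\<forall>i\<in>{1..N}. s i \<in> borel_measurable (restrict_space lborel \<Omega>) \<and>
                  (\<exists>c>0. \<exists>K. \<forall>z\<in>\<Omega>. c \<le> s i z \<and> s i z \<le> K)"
    and G_def: "G \<equiv> (\<lambda>i j. LINT E:{Emin..Emax}|lborel. I0 E * g i E * g j E)"
    and qf_def: "qf \<equiv> (\<lambda>v :: nat \<Rightarrow> real. (1/2) * (\<Sum>i\<in>{1..N}. \<Sum>j\<in>{1..N}. v i * G i j * v j))"
    and Q_def: "Q \<equiv> (\<lambda>\<psi> :: nat \<Rightarrow> 'a \<Rightarrow> real.
                 \<integral>\<^sup>+ p \<in> SigmaX \<Omega> \<xi>. ennreal (qf (\<lambda>i. Dop \<Omega> (\<lambda>z. \<psi> i z / s i z) p))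
                   \<partial>hausdorff_measure (real DIM('a)))"
    and Adm_def: "Adm \<equiv> {\<psi> :: nat \<Rightarrow> 'a \<Rightarrow> real. (\<forall>i\<in>{1..N}. \<psi> i \<in> borel_measurable lborel) \<and>
                   (\<integral>\<^sup>+ z \<in> \<Omega>. ennreal (\<Sum>i\<in>{1..N}. (\<psi> i z)\<^sup>2) \<partial>lborel) \<le> 1}"
    and lam_def: "lam \<equiv> (SUP \<psi>\<in>Adm. Q \<psi>)"
    and lam_fin: "lam < \<infinity>"
    and w: "\<forall>i\<in>{1..N}. wold i \<in> borel_measurable lborel \<and> wnew i \<in> borel_measurable lborel \<and>
              (\<forall>z\<in>\<Omega>. wold i z \<in> {0..1} \<and> wnew i z \<in> {0..1})"
    and A_def: "A \<equiv> (LINT z:\<Omega>|lborel. \<Sum>i\<in>{1..N}.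
                 Dstar \<Omega> \<xi> (\<lambda>p. LINT E:{Emin..Emax}|lborel. y E p * g i E) z *
                 (wnew i z - wold i z)\<^sup>2 / (wold i z + \<epsilon>))"
    and C_def: "C \<equiv> \<integral>\<^sup>+ p \<in> SigmaX \<Omega> \<xi>. ennreal (qf (\<lambda>i. Dop \<Omega> (\<lambda>z. wnew i z - wold i z) p))
                   \<partial>hausdorff_measure (real DIM('a))"
    and C_pos: "C > 0"
  shows "A / enn2real C \<ge> 1 / (1 + \<epsilon>) * (1 / enn2real lam)"
  proof -
  have \<Omega>_sets: "\<Omega> \<in> sets lborel" "emeasure lborel \<Omega> < \<infinity>"
    using Omega(2,3) emeasure_bounded_finite by auto
  define D where "D i = Dstar \<Omega> \<xi> (\<lambda>p. LINT E:{Emin..Emax}|lborel. y E p * g i E)" for i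
  obtain K where K: "\<And>i z. i \<in> {1..N} \<Longrightarrow> z \<in> \<Omega> \<Longrightarrow> 0 < s i z \<and> s i z \<le> K i"
    using s_ok by (metis less_le_trans)
  have s_sq: "(s i z)\<^sup>2 = D i z" if "i \<in> {1..N}" "z \<in> \<Omega>" for i z
    using K[OF that] unfolding s_def D_def by (simp add: real_sqrt_gt_0_iff)
  have w01: "0 \<le> wold i z \<and> wold i z \<le> 1" "(wnew i z - wold i z)\<^sup>2 \<le> 1"
    if "i \<in> {1..N}" "z \<in> \<Omega>" for i z
    using w that by (fastforce simp: abs_square_le_1 abs_le_iff)+
  define a where "a i z = (s i z)\<^sup>2 * (wnew i z - wold i z)\<^sup>2" for i z
  define P where "P = (LINT z:\<Omega>|lborel. \<Sum>i\<in>{1..N}. a i z)"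
  have w_meas: "wold i \<in> borel_measurable (restrict_space lborel \<Omega>)"
    "wnew i \<in> borel_measurable (restrict_space lborel \<Omega>)" if "i \<in> {1..N}" for i
    using w that by (auto intro: measurable_restrict_space1)
  have a_meas: "a i \<in> borel_measurable (restrict_space lborel \<Omega>)" if "i \<in> {1..N}" for i
    using s_ok w_meas[OF that] that unfolding a_def[abs_def]
    by (auto intro!: borel_measurable_times borel_measurable_power borel_measurable_diff)
  have a_bound: "0 \<le> a i z \<and> a i z \<le> (K i)\<^sup>2" if "i \<in> {1..N}" "z \<in> \<Omega>" for i z
  proof -
    have "(s i z)\<^sup>2 * (wnew i z - wold i z)\<^sup>2 \<le> (s i z)\<^sup>2"
      using w01(2)[OF that] by (simp add: mult_left_le)
    also have "\<dots> \<le> (K i)\<^sup>2" using K[OF that] by (simp add: power_mono)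
    finally show ?thesis unfolding a_def by simp
  qed
  note weighted = set_integral_sum_div_weight_ge[where I="{1..N}" and a=a and w=wold,
      OF eps \<Omega>_sets a_meas w_meas(1) a_bound w01(1)]
  have A_ge: "P / (1 + \<epsilon>) \<le> A"
  proof -
    have "A = (LINT z:\<Omega>|lborel. \<Sum>i\<in>{1..N}. a i z / (wold i z + \<epsilon>))"
      unfolding A_def a_def D_def[symmetric] using \<Omega>_sets s_sq
      by (intro set_lebesgue_integral_cong) auto
    with weighted(2) show ?thesis unfolding P_def by simp
  qed
  have scaled: "ennreal (t\<^sup>2) * C \<le> lam" if "t\<^sup>2 * P \<le> 1" for t
  proof -
    define \<phi> where "\<phi> i z = t * (indicator \<Omega> z * s i z) * (wnew i z - wold i z)" for i z
    have "(\<integral>\<^sup>+ z \<in> \<Omega>. ennreal (\<Sum>i\<in>{1..N}. (\<phi> i z)\<^sup>2) \<partial>lborel)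
        = (\<integral>\<^sup>+ z \<in> \<Omega>. ennreal (t\<^sup>2 * (\<Sum>i\<in>{1..N}. a i z)) \<partial>lborel)"
      by (intro nn_integral_cong) (auto simp: \<phi>_def a_def indicator_def sum_distrib_left
          power_mult_distrib ac_simps)
    also have "\<dots> = ennreal (t\<^sup>2 * P)"
      unfolding P_def using weighted(1) a_bound
      by (subst set_nn_integral_eq_set_lebesgue_integral) (auto intro!: sum_nonneg mult_nonneg_nonneg)
    moreover have "\<phi> i \<in> borel_measurable lborel" if "i \<in> {1..N}" for i
    proof -
      have "(\<lambda>z. indicator \<Omega> z * s i z) \<in> borel_measurable lborel"
        using s_ok that \<Omega>_sets by (simp add: borel_measurable_restrict_space_iff)
      then show ?thesis
        using w that unfolding \<phi>_def[abs_def] by (auto intro!: borel_measurable_times borel_measurable_diff)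
    qed
    ultimately have "\<phi> \<in> Adm" using that unfolding Adm_def by simp
    then have "Q \<phi> \<le> lam" unfolding lam_def by (rule SUP_upper)
    moreover have "ennreal (t\<^sup>2) * C \<le> Q \<phi>"
      unfolding C_def Q_def qf_def quad_form_def[symmetric]
    proof (intro nn_integral_quad_form_Dop_cmult_ge)
      fix i z assume "i \<in> {1..N}" "z \<in> \<Omega>"
      then show "\<phi> i z / s i z = t * (wnew i z - wold i z)"
        using K[of i z] by (simp add: \<phi>_def)
    qed
    ultimately show ?thesis by simp
  qed
  have P_nonneg: "0 \<le> P"
    unfolding P_def set_lebesgue_integral_def using a_bound
    by (auto intro!: integral_nonneg_AE AE_I2 sum_nonneg simp: indicator_def)
  note ratio = inverse_le_ratio_if_scaled_bound[OF scaled P_nonneg C_pos lam_fin]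
  have "1 / (1 + \<epsilon>) * (1 / enn2real lam) \<le> P / (1 + \<epsilon>) / enn2real C"
    using mult_left_mono[OF ratio(2), of "1 / (1 + \<epsilon>)"] eps by simp
  also have "\<dots> \<le> A / enn2real C"
    using divide_right_mono[OF A_ge less_imp_le[OF ratio(1)]] by simp
  finally show ?thesis .
qed

end
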